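(* Let $B_J=L+U\in\mathbb R^{n\times n}$ with $L$ strictly lower triangular, $U$ strictly upper triangular, $L\ne O$ and $U^{(i)}_r\ne O$ for all $i=1,\dots,n-1$. Then the iteration matrix $T(\mathcal B_{FUTR})$ of the splitting $\mathcal B_{FUTR}=(U^{(n-1)}_r,U^{(n-2)}_r,\dots,U^{(1)}_r,L)$ and the backward Gauss–Seidel iteration matrix $B_{bGS}=(I-U)^{-1}L$ have the same nonzero eigenvalues.
   Context: For $i\in\{1,\dots,n-1\}$, $U^{(i)}_r$ is the $n\times n$ matrix whose $i$-th row agrees with the $i$-th row of $U$ in columns $j\ge i+1$ and which is zero elsewhere (the $i$-th row of $U$). For $B\in\mathbb R^{n\times n}$, a splitting of $B$ of order $d\ge1$ is an ordered $d$-tuple $\mathcal B=(B_1,\dots,B_d)$ of real $n\times n$ matrices with $B_p\neq O$ for all $p$, $\sum_{p=1}^d B_p=B$, and $B_p\circ B_q=O$ (Hadamard product) for $p\ne q$. The iteration matrix of $\mathcal B$ is the $dn\times dn$ matrix $T(\mathcal B)=(I_{dn}-\mathcal L)^{-1}\mathcal U$, where $\mathcal L,\mathcal U$ are $d\times d$ block matrices with $n\times n$ blocks, $\mathcal L_{ij}=B_j$ if $i>j$ and $O$ otherwise, $\mathcal U_{ij}=B_j$ if $i\le j$ and $O$ otherwise. *)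

theory Defs
  imports "Jordan_Normal_Form.Matrix" "Jordan_Normal_Form.Char_Poly"
begin

definition minv :: "'a :: comm_ring_1 mat \<Rightarrow> 'a mat" where
  "minv A = (THE B. B \<in> carrier_mat (dim_row A) (dim_row A) \<and>
                    A * B = 1\<^sub>m (dim_row A) \<and> B * A = 1\<^sub>m (dim_row A))"

definition strictly_lower :: "nat \<Rightarrow> real mat \<Rightarrow> bool" where
  "strictly_lower n L \<longleftrightarrow> L \<in> carrier_mat n n \<and>
     (\<forall>i<n. \<forall>j<n. i \<le> j \<longrightarrow> L $$ (i, j) = 0)"

definition strictly_upper :: "nat \<Rightarrow> real mat \<Rightarrow> bool" where
  "strictly_upper n U \<longleftrightarrow> U \<in> carrier_mat n n \<and>
     (\<forall>i<n. \<forall>j<n. j \<le> i \<longrightarrow> U $$ (i, j) = 0)"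

(* U_r^{(i+1)} in the paper's 1-based notation: row i (0-based) of U in columns j \<ge> i+1,
   zero elsewhere. *)
definition Ur :: "nat \<Rightarrow> real mat \<Rightarrow> nat \<Rightarrow> real mat" where
  "Ur n U i = mat n n (\<lambda>(r, c). if r = i \<and> c > i then U $$ (r, c) else 0)"

definition blockL :: "nat \<Rightarrow> real mat list \<Rightarrow> real mat" where
  "blockL n Bs = mat (length Bs * n) (length Bs * n)
     (\<lambda>(a, b). if b div n < a div n then (Bs ! (b div n)) $$ (a mod n, b mod n) else 0)"

definition blockU :: "nat \<Rightarrow> real mat list \<Rightarrow> real mat" where
  "blockU n Bs = mat (length Bs * n) (length Bs * n)
     (\<lambda>(a, b). if a div n \<le> b div n then (Bs ! (b div n)) $$ (a mod n, b mod n) else 0)"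

definition iter_mat :: "nat \<Rightarrow> real mat list \<Rightarrow> real mat" where
  "iter_mat n Bs = minv (1\<^sub>m (length Bs * n) - blockL n Bs) * blockU n Bs"

(* \<B>_FUTR = (U_r^{(n-1)}, U_r^{(n-2)}, ..., U_r^{(1)}, L); 0-based rows n-2, ..., 0 *)
definition B_FUTR :: "nat \<Rightarrow> real mat \<Rightarrow> real mat \<Rightarrow> real mat list" where
  "B_FUTR n L U = map (\<lambda>k. Ur n U (n - 2 - k)) [0..<n - 1] @ [L]"

definition B_bGS :: "nat \<Rightarrow> real mat \<Rightarrow> real mat \<Rightarrow> real mat" where
  "B_bGS n L U = minv (1\<^sub>m n - U) * L"

end

theory Submission
  imports Defs
begin

text \<open>A nonzero \<open>z\<close> is an eigenvalue of \<open>(I - \<L>)\<inverse> \<U>\<close> iff \<open>\<U> x = z (I - \<L>) x\<close> has a nonzero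
  solution, and an eigenvalue of \<open>(I - U)\<inverse> L\<close> iff \<open>L y = z (I - U) y\<close> has one. The block
  \<open>Ur n U c\<close> only touches row \<open>c\<close>, so the block system decouples row by row: in a solution \<open>x\<close>
  every block agrees with the last one in the rows whose \<open>U\<close>-block lies in \<open>\<L>\<close>, hence the last
  block solves the Gauss--Seidel system; conversely a solution \<open>y\<close> of that system extends to
  \<open>x\<close> by taking \<open>y + (1 - z) / z \<cdot> U y\<close> in the remaining rows.\<close>

lemma minv_eqI:
  assumes A: "A \<in> carrier_mat m m" and B: "B \<in> carrier_mat m m"
    and AB: "A * B = 1\<^sub>m m" and BA: "B * A = 1\<^sub>m m"
  shows "minv A = B"
  unfolding minv_def
proof (rule the_equality)
  fix C assume "C \<in> carrier_mat (dim_row A) (dim_row A) \<and>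
    A * C = 1\<^sub>m (dim_row A) \<and> C * A = 1\<^sub>m (dim_row A)"
  hence C: "C \<in> carrier_mat m m" and CA: "C * A = 1\<^sub>m m" using A by auto
  have "C = C * (A * B)" using C AB by simp
  also have "\<dots> = (C * A) * B" using C A B by (simp add: assoc_mult_mat)
  finally show "C = B" using CA B by simp
qed (use A B AB BA in auto)

lemma det_unit_upper_triangular:
  fixes A :: "'a :: comm_ring_1 mat"
  assumes A: "A \<in> carrier_mat m m" and diag: "\<forall>i<m. A $$ (i, i) = 1"
    and upper: "\<forall>i<m. \<forall>j<i. A $$ (i, j) = 0"
  shows "det A = 1"
proof -
  have "upper_triangular A" using A upper unfolding upper_triangular_def by auto
  hence "det A = prod_list (diag_mat A)" using A by (rule det_upper_triangular)
  also have "diag_mat A = map (\<lambda>_. 1) [0..<m]"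
    using A diag unfolding diag_mat_def by simp
  finally show ?thesis by (simp add: map_replicate_const)
qed

lemma det_unit_lower_triangular:
  fixes A :: "'a :: comm_ring_1 mat"
  assumes A: "A \<in> carrier_mat m m" and diag: "\<forall>i<m. A $$ (i, i) = 1"
    and lower: "\<forall>i<m. \<forall>j<m. i < j \<longrightarrow> A $$ (i, j) = 0"
  shows "det A = 1"
proof -
  have "det (transpose_mat A) = 1"
    by (rule det_unit_upper_triangular) (use A diag lower in auto)
  thus ?thesis using det_transpose[OF A] by simp
qed

lemma eigenvalue_inverse_mult_iff:
  fixes A Ai B :: "'a :: field mat"
  assumes A: "A \<in> carrier_mat m m" and Ai: "Ai \<in> carrier_mat m m" and B: "B \<in> carrier_mat m m"
    and inv: "A * Ai = 1\<^sub>m m" "Ai * A = 1\<^sub>m m"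
  shows "eigenvalue (Ai * B) z \<longleftrightarrow> (\<exists>v \<in> carrier_vec m. v \<noteq> 0\<^sub>v m \<and> B *\<^sub>v v = z \<cdot>\<^sub>v (A *\<^sub>v v))"
proof -
  have "Ai * B *\<^sub>v v = z \<cdot>\<^sub>v v \<longleftrightarrow> B *\<^sub>v v = z \<cdot>\<^sub>v (A *\<^sub>v v)" if v: "v \<in> carrier_vec m" for v
  proof
    assume eq: "Ai * B *\<^sub>v v = z \<cdot>\<^sub>v v"
    have "B *\<^sub>v v = (A * Ai) *\<^sub>v (B *\<^sub>v v)" using B v inv(1) by simp
    also have "\<dots> = A *\<^sub>v (Ai * B *\<^sub>v v)" using A Ai B v by (simp add: assoc_mult_mat_vec)
    also have "\<dots> = z \<cdot>\<^sub>v (A *\<^sub>v v)" using A v by (simp add: eq mult_mat_vec)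
    finally show "B *\<^sub>v v = z \<cdot>\<^sub>v (A *\<^sub>v v)" .
  next
    assume eq: "B *\<^sub>v v = z \<cdot>\<^sub>v (A *\<^sub>v v)"
    have "Ai * B *\<^sub>v v = Ai *\<^sub>v (B *\<^sub>v v)" using Ai B v by (rule assoc_mult_mat_vec)
    also have "\<dots> = z \<cdot>\<^sub>v ((Ai * A) *\<^sub>v v)" using A Ai v by (simp add: eq mult_mat_vec assoc_mult_mat_vec)
    also have "\<dots> = z \<cdot>\<^sub>v v" using v inv(2) by simp
    finally show "Ai * B *\<^sub>v v = z \<cdot>\<^sub>v v" .
  qed
  thus ?thesis unfolding eigenvalue_def eigenvector_def using Ai by auto
qed

definition mat_act :: "nat \<Rightarrow> real mat \<Rightarrow> (nat \<Rightarrow> complex) \<Rightarrow> nat \<Rightarrow> complex" where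
  "mat_act m M f i = (\<Sum>j<m. complex_of_real (M $$ (i, j)) * f j)"

lemma mat_act_cong:
  "(\<And>j. j < m \<Longrightarrow> f j = g j) \<Longrightarrow> mat_act m M f i = mat_act m M g i"
  unfolding mat_act_def by (intro sum.cong[OF refl]) simp

lemma mat_act_eq_0: "(\<And>j. j < m \<Longrightarrow> f j = 0) \<Longrightarrow> mat_act m M f i = 0"
  unfolding mat_act_def by (intro sum.neutral) simp

lemma mat_act_mult_mat_vec:
  assumes "M \<in> carrier_mat m m" and "v \<in> carrier_vec m" and "i < m"
  shows "(map_mat complex_of_real M *\<^sub>v v) $ i = mat_act m M (($) v) i"
  using assms by (auto simp: mat_act_def scalar_prod_def atLeast0LessThan intro!: sum.cong[OF refl])

lemma mat_act_one_minus:
  assumes M: "M \<in> carrier_mat m m" and i: "i < m"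
  shows "mat_act m (1\<^sub>m m - M) f i = f i - mat_act m M f i"
proof -
  have "mat_act m (1\<^sub>m m - M) f i = (\<Sum>j<m. (if i = j then f j else 0) - complex_of_real (M $$ (i, j)) * f j)"
    unfolding mat_act_def using M i by (intro sum.cong[OF refl]) (simp add: left_diff_distrib)
  also have "\<dots> = f i - mat_act m M f i"
    using i by (simp add: sum_subtractf mat_act_def)
  finally show ?thesis .
qed

lemma gen_eigenvector_iff_mat_act:
  assumes A: "A \<in> carrier_mat m m" and B: "B \<in> carrier_mat m m"
  shows "(\<exists>v \<in> carrier_vec m. v \<noteq> 0\<^sub>v m \<and>
      map_mat complex_of_real B *\<^sub>v v = z \<cdot>\<^sub>v (map_mat complex_of_real A *\<^sub>v v))
    \<longleftrightarrow> (\<exists>f. (\<exists>i<m. f i \<noteq> 0) \<and> (\<forall>i<m. mat_act m B f i = z * mat_act m A f i))"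
    (is "(\<exists>v \<in> carrier_vec m. ?nonzero v \<and> ?eq v) \<longleftrightarrow> _")
proof -
  have eq: "?eq v \<longleftrightarrow> (\<forall>i<m. mat_act m B (($) v) i = z * mat_act m A (($) v) i)"
    if "v \<in> carrier_vec m" for v
    using that A B by (auto simp del: index_mult_mat_vec simp: vec_eq_iff mat_act_mult_mat_vec)
  have nonzero: "?nonzero v \<longleftrightarrow> (\<exists>i<m. v $ i \<noteq> 0)" if "v \<in> carrier_vec m" for v
    using that by (auto simp: vec_eq_iff)
  show ?thesis
  proof
    assume "\<exists>v \<in> carrier_vec m. ?nonzero v \<and> ?eq v"
    then obtain v where "v \<in> carrier_vec m" "?nonzero v" "?eq v" by blast
    thus "\<exists>f. (\<exists>i<m. f i \<noteq> 0) \<and> (\<forall>i<m. mat_act m B f i = z * mat_act m A f i)"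
      using eq nonzero by blast
  next
    assume "\<exists>f. (\<exists>i<m. f i \<noteq> 0) \<and> (\<forall>i<m. mat_act m B f i = z * mat_act m A f i)"
    then obtain f where f: "\<exists>i<m. f i \<noteq> 0" "\<forall>i<m. mat_act m B f i = z * mat_act m A f i"
      by blast
    have "mat_act m M (($) (vec m f)) i = mat_act m M f i" for M i
      by (rule mat_act_cong) simp
    hence "?eq (vec m f)" using f(2) eq[of "vec m f"] by simp
    moreover have "?nonzero (vec m f)" using f(1) by (auto simp: vec_eq_iff)
    ultimately show "\<exists>v \<in> carrier_vec m. ?nonzero v \<and> ?eq v"
      by (intro bexI[of _ "vec m f"]) simp_all
  qed
qed

lemma eigenvalue_minv_mult_iff:
  fixes A B :: "real mat"
  assumes A: "A \<in> carrier_mat m m" and B: "B \<in> carrier_mat m m" and det: "det A \<noteq> 0"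
  shows "eigenvalue (map_mat complex_of_real (minv A * B)) z
    \<longleftrightarrow> (\<exists>f. (\<exists>i<m. f i \<noteq> 0) \<and> (\<forall>i<m. mat_act m B f i = z * mat_act m A f i))"
proof -
  obtain Ai where Ai: "Ai \<in> carrier_mat m m" and inv: "A * Ai = 1\<^sub>m m" "Ai * A = 1\<^sub>m m"
    using det_non_zero_imp_unit[OF A det, of "()"] unfolding Units_def ring_mat_def by auto
  let ?c = "map_mat complex_of_real"
  have cA: "?c A \<in> carrier_mat m m" and cAi: "?c Ai \<in> carrier_mat m m"
    and cB: "?c B \<in> carrier_mat m m" using A Ai B by auto
  have prod: "?c (minv A * B) = ?c Ai * ?c B"
    using minv_eqI[OF A Ai inv] of_real_hom.mat_hom_mult[OF Ai B] by simp
  have "?c A * ?c Ai = 1\<^sub>m m"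
    by (metis of_real_hom.mat_hom_mult[OF A Ai] inv(1) of_real_hom.mat_hom_one)
  moreover have "?c Ai * ?c A = 1\<^sub>m m"
    by (metis of_real_hom.mat_hom_mult[OF Ai A] inv(2) of_real_hom.mat_hom_one)
  ultimately have "eigenvalue (?c Ai * ?c B) z \<longleftrightarrow> (\<exists>v \<in> carrier_vec m. v \<noteq> 0\<^sub>v m \<and>
      ?c B *\<^sub>v v = z \<cdot>\<^sub>v (?c A *\<^sub>v v))"
    by (rule eigenvalue_inverse_mult_iff[OF cA cAi cB])
  thus ?thesis unfolding prod gen_eigenvector_iff_mat_act[OF A B] .
qed

lemma mult_add_less_mult:
  fixes k c d n :: nat
  assumes "k < d" and "c < n"
  shows "k * n + c < d * n"
proof -
  have "(k + 1) * n \<le> d * n" using assms(1) by (intro mult_le_mono1) simp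
  thus ?thesis using assms(2) by simp
qed

lemma sum_lessThan_mult:
  "(\<Sum>a<d * n. g a) = (\<Sum>j<d. \<Sum>c<n. g (j * n + c :: nat))"
proof -
  have "(\<Sum>b\<in>{j * n..<j * n + n}. g b) = (\<Sum>c<n. g (j * n + c))" for j
    by (rule sum.reindex_bij_witness[of _ "\<lambda>c. j * n + c" "\<lambda>b. b - j * n"]) auto
  thus ?thesis by (simp flip: sum.nat_group)
qed

lemma ex_block_fun_iff:
  fixes d n :: nat
  shows "(\<exists>f. (\<exists>a<d * n. f a \<noteq> 0) \<and> (\<forall>a<d * n. P f a)) \<longleftrightarrow>
   (\<exists>X. (\<exists>k<d. \<exists>c<n. X k c \<noteq> 0) \<and>
        (\<forall>k<d. \<forall>c<n. P (\<lambda>a. X (a div n) (a mod n)) (k * n + c)))"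
proof
  assume "\<exists>f. (\<exists>a<d * n. f a \<noteq> 0) \<and> (\<forall>a<d * n. P f a)"
  then obtain f a where a: "a < d * n" "f a \<noteq> 0" and P: "\<forall>a<d * n. P f a" by blast
  have n: "n > 0" using a(1) by (cases n) auto
  have f: "(\<lambda>a. f (a div n * n + a mod n)) = f" by simp
  have "a div n < d" "a mod n < n" "f (a div n * n + a mod n) \<noteq> 0"
    using a n by (simp_all add: less_mult_imp_div_less)
  moreover have "\<forall>k<d. \<forall>c<n. P f (k * n + c)" using P mult_add_less_mult by blast
  ultimately show "\<exists>X. (\<exists>k<d. \<exists>c<n. X k c \<noteq> 0) \<and>
      (\<forall>k<d. \<forall>c<n. P (\<lambda>a. X (a div n) (a mod n)) (k * n + c))"
    by (intro exI[of _ "\<lambda>k c. f (k * n + c)"]) (auto simp only: f)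
next
  assume "\<exists>X. (\<exists>k<d. \<exists>c<n. X k c \<noteq> 0) \<and>
      (\<forall>k<d. \<forall>c<n. P (\<lambda>a. X (a div n) (a mod n)) (k * n + c))"
  then obtain X k c where kc: "k < d" "c < n" "X k c \<noteq> 0"
    and P: "\<forall>k<d. \<forall>c<n. P (\<lambda>a. X (a div n) (a mod n)) (k * n + c)" by blast
  define f where "f a = X (a div n) (a mod n)" for a
  have "f (k * n + c) \<noteq> 0" using kc by (simp add: f_def)
  moreover have "P f a" if "a < d * n" for a
  proof -
    have "n > 0" using that by (cases n) auto
    hence "a div n < d" "a mod n < n" using that by (simp_all add: less_mult_imp_div_less)
    thus ?thesis using P unfolding f_def by (metis div_mult_mod_eq)
  qed
  ultimately show "\<exists>f. (\<exists>a<d * n. f a \<noteq> 0) \<and> (\<forall>a<d * n. P f a)"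
    using mult_add_less_mult[OF kc(1,2)] by blast
qed

lemma blockU_index:
  assumes "length Bs = d" "k < d" "j < d" "c < n" "c' < n"
  shows "blockU n Bs $$ (k * n + c, j * n + c') = (if k \<le> j then Bs ! j $$ (c, c') else 0)"
  using assms mult_add_less_mult[of k d c n] mult_add_less_mult[of j d c' n]
  unfolding blockU_def by simp

lemma blockL_index:
  assumes "length Bs = d" "k < d" "j < d" "c < n" "c' < n"
  shows "blockL n Bs $$ (k * n + c, j * n + c') = (if j < k then Bs ! j $$ (c, c') else 0)"
  using assms mult_add_less_mult[of k d c n] mult_add_less_mult[of j d c' n]
  unfolding blockL_def by simp

lemma mat_act_blockU:
  assumes len: "length Bs = d" and k: "k < d" and c: "c < n"
  shows "mat_act (d * n) (blockU n Bs) (\<lambda>a. X (a div n) (a mod n)) (k * n + c)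
    = (\<Sum>j<d. if k \<le> j then mat_act n (Bs ! j) (X j) c else 0)"
proof -
  have "mat_act (d * n) (blockU n Bs) (\<lambda>a. X (a div n) (a mod n)) (k * n + c)
    = (\<Sum>j<d. \<Sum>c'<n. complex_of_real (blockU n Bs $$ (k * n + c, j * n + c')) * X j c')"
    unfolding mat_act_def sum_lessThan_mult by (intro sum.cong[OF refl]) simp
  also have "\<dots> = (\<Sum>j<d. if k \<le> j then mat_act n (Bs ! j) (X j) c else 0)"
    using len k c by (intro sum.cong[OF refl]) (simp add: blockU_index mat_act_def)
  finally show ?thesis .
qed

lemma mat_act_blockL:
  assumes len: "length Bs = d" and k: "k < d" and c: "c < n"
  shows "mat_act (d * n) (blockL n Bs) (\<lambda>a. X (a div n) (a mod n)) (k * n + c)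
    = (\<Sum>j<d. if j < k then mat_act n (Bs ! j) (X j) c else 0)"
proof -
  have "mat_act (d * n) (blockL n Bs) (\<lambda>a. X (a div n) (a mod n)) (k * n + c)
    = (\<Sum>j<d. \<Sum>c'<n. complex_of_real (blockL n Bs $$ (k * n + c, j * n + c')) * X j c')"
    unfolding mat_act_def sum_lessThan_mult by (intro sum.cong[OF refl]) simp
  also have "\<dots> = (\<Sum>j<d. if j < k then mat_act n (Bs ! j) (X j) c else 0)"
    using len k c by (intro sum.cong[OF refl]) (simp add: blockL_index mat_act_def)
  finally show ?thesis .
qed

lemma det_one_minus_blockL:
  assumes "length Bs = d"
  shows "det (1\<^sub>m (d * n) - blockL n Bs) = 1"
proof (rule det_unit_lower_triangular)
  show "1\<^sub>m (d * n) - blockL n Bs \<in> carrier_mat (d * n) (d * n)"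
    using assms unfolding blockL_def by auto
  have "blockL n Bs $$ (a, b) = 0" if "a < d * n" "b < d * n" "a \<le> b" for a b
    using that div_le_mono[OF that(3), of n] assms unfolding blockL_def by auto
  thus "\<forall>i<d * n. (1\<^sub>m (d * n) - blockL n Bs) $$ (i, i) = 1"
    "\<forall>i<d * n. \<forall>j<d * n. i < j \<longrightarrow> (1\<^sub>m (d * n) - blockL n Bs) $$ (i, j) = 0"
    using assms unfolding blockL_def by auto
qed

lemma mat_act_strictly_upper_cong:
  assumes U: "strictly_upper n U" and c: "c < n"
    and fg: "\<And>c'. c < c' \<Longrightarrow> c' < n \<Longrightarrow> f c' = g c'"
  shows "mat_act n U f c = mat_act n U g c"
  unfolding mat_act_def
proof (rule sum.cong[OF refl])
  fix c' assume "c' \<in> {..<n}"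
  thus "complex_of_real (U $$ (c, c')) * f c' = complex_of_real (U $$ (c, c')) * g c'"
    using U c fg unfolding strictly_upper_def by (cases "c < c'") auto
qed

lemma mat_act_strictly_upper_last_row:
  assumes "strictly_upper n U"
  shows "mat_act n U f (n - 1) = 0"
  unfolding mat_act_def using assms unfolding strictly_upper_def by (intro sum.neutral) auto

lemma mat_act_Ur:
  assumes "strictly_upper n U" and "c < n" and "r < n"
  shows "mat_act n (Ur n U r) f c = (if c = r then mat_act n U f c else 0)"
  using assms unfolding mat_act_def Ur_def strictly_upper_def
  by (auto intro!: sum.cong[OF refl] sum.neutral)

lemma length_B_FUTR: "0 < n \<Longrightarrow> length (B_FUTR n L U) = n"
  unfolding B_FUTR_def by simp

lemma nth_B_FUTR_last: "0 < n \<Longrightarrow> B_FUTR n L U ! (n - 1) = L"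
  unfolding B_FUTR_def by (simp add: nth_append)

lemma nth_B_FUTR: "j < n - 1 \<Longrightarrow> B_FUTR n L U ! j = Ur n U (n - 2 - j)"
  unfolding B_FUTR_def by (simp add: nth_append)

lemma sum_B_FUTR_row:
  assumes U: "strictly_upper n U" and c: "c < n"
  shows "(\<Sum>j<n. if Q j then mat_act n (B_FUTR n L U ! j) (X j) c else 0)
    = (if Q (n - 1) then mat_act n L (X (n - 1)) c else 0)
      + (if c + 2 \<le> n \<and> Q (n - 2 - c) then mat_act n U (X (n - 2 - c)) c else 0)"
proof -
  obtain m where nm: "n = Suc m" using c by (cases n) auto
  have "(\<Sum>j<m. if Q j then mat_act n (B_FUTR n L U ! j) (X j) c else 0)
    = (\<Sum>j<m. if j = n - 2 - c then (if c + 2 \<le> n \<and> Q j then mat_act n U (X j) c else 0) else 0)"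
  proof (rule sum.cong[OF refl])
    fix j assume "j \<in> {..<m}"
    hence j: "j < n - 1" using nm by simp
    have "mat_act n (B_FUTR n L U ! j) (X j) c = (if c = n - 2 - j then mat_act n U (X j) c else 0)"
      unfolding nth_B_FUTR[OF j] using U c j by (simp add: mat_act_Ur)
    moreover have "c = n - 2 - j \<longleftrightarrow> j = n - 2 - c \<and> c + 2 \<le> n" using j by auto
    ultimately show "(if Q j then mat_act n (B_FUTR n L U ! j) (X j) c else 0)
      = (if j = n - 2 - c then (if c + 2 \<le> n \<and> Q j then mat_act n U (X j) c else 0) else 0)"
      by auto
  qed
  also have "\<dots> = (if c + 2 \<le> n \<and> Q (n - 2 - c) then mat_act n U (X (n - 2 - c)) c else 0)"
    using nm by (simp add: sum.delta')
  finally show ?thesis using nth_B_FUTR_last[of n L U] nm by simp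
qed

text \<open>Row \<open>c\<close> of block \<open>k\<close> of \<open>\<U> x = z (I - \<L>) x\<close> for \<open>B_FUTR\<close>, the block vector \<open>x\<close>
  being encoded as \<open>X k c\<close>. Row \<open>c\<close> is touched only by the last block \<open>L\<close> and by block
  \<open>n - 2 - c\<close>, i.e. \<open>Ur n U c\<close>, which belongs to \<open>\<U>\<close> iff \<open>c + k + 2 \<le> n\<close>.\<close>

definition futr_eq ::
    "nat \<Rightarrow> real mat \<Rightarrow> real mat \<Rightarrow> complex \<Rightarrow> (nat \<Rightarrow> nat \<Rightarrow> complex) \<Rightarrow> nat \<Rightarrow> nat \<Rightarrow> bool" where
  "futr_eq n L U z X k c \<longleftrightarrow>
     mat_act n L (X (n - 1)) c + (if c + k + 2 \<le> n then mat_act n U (X (n - 2 - c)) c else 0)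
     = z * (X k c - (if c + 2 \<le> n \<and> n \<le> c + k + 1 then mat_act n U (X (n - 2 - c)) c else 0))"

lemma mat_act_B_FUTR_iff_futr_eq:
  assumes U: "strictly_upper n U" and k: "k < n" and c: "c < n"
  shows "mat_act (n * n) (blockU n (B_FUTR n L U)) (\<lambda>a. X (a div n) (a mod n)) (k * n + c)
      = z * mat_act (n * n) (1\<^sub>m (n * n) - blockL n (B_FUTR n L U)) (\<lambda>a. X (a div n) (a mod n)) (k * n + c)
    \<longleftrightarrow> futr_eq n L U z X k c"
proof -
  let ?f = "\<lambda>a. X (a div n) (a mod n)"
  have len: "length (B_FUTR n L U) = n" using k by (simp add: length_B_FUTR)
  have "mat_act (n * n) (blockU n (B_FUTR n L U)) ?f (k * n + c)
    = mat_act n L (X (n - 1)) c + (if c + k + 2 \<le> n then mat_act n U (X (n - 2 - c)) c else 0)"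
    unfolding mat_act_blockU[OF len k c] sum_B_FUTR_row[OF U c] using k
    by (auto intro!: arg_cong2[where f = "(+)"])
  moreover have "mat_act (n * n) (blockL n (B_FUTR n L U)) ?f (k * n + c)
    = (if c + 2 \<le> n \<and> n \<le> c + k + 1 then mat_act n U (X (n - 2 - c)) c else 0)"
    unfolding mat_act_blockL[OF len k c] sum_B_FUTR_row[OF U c] using k
    by (auto intro!: arg_cong2[where f = "(+)"])
  moreover have "mat_act (n * n) (1\<^sub>m (n * n) - blockL n (B_FUTR n L U)) ?f (k * n + c)
    = X k c - mat_act (n * n) (blockL n (B_FUTR n L U)) ?f (k * n + c)"
    using mat_act_one_minus[of "blockL n (B_FUTR n L U)" "n * n"] mult_add_less_mult[OF k c] c
    unfolding blockL_def len by simp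
  ultimately show ?thesis unfolding futr_eq_def by simp
qed

lemma eigenvalue_iter_mat_B_FUTR_iff:
  assumes U: "strictly_upper n U" and n: "0 < n"
  shows "eigenvalue (map_mat complex_of_real (iter_mat n (B_FUTR n L U))) z
    \<longleftrightarrow> (\<exists>X. (\<exists>k<n. \<exists>c<n. X k c \<noteq> 0) \<and> (\<forall>k<n. \<forall>c<n. futr_eq n L U z X k c))"
proof -
  let ?Bs = "B_FUTR n L U"
  let ?A = "1\<^sub>m (n * n) - blockL n ?Bs"
  have len: "length ?Bs = n" using n by (rule length_B_FUTR)
  have A: "?A \<in> carrier_mat (n * n) (n * n)" and B: "blockU n ?Bs \<in> carrier_mat (n * n) (n * n)"
    unfolding blockL_def blockU_def len by auto
  have det: "det ?A \<noteq> 0" using det_one_minus_blockL[OF len] by simp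
  have "eigenvalue (map_mat complex_of_real (iter_mat n ?Bs)) z
    \<longleftrightarrow> (\<exists>f. (\<exists>a<n * n. f a \<noteq> 0) \<and>
          (\<forall>a<n * n. mat_act (n * n) (blockU n ?Bs) f a = z * mat_act (n * n) ?A f a))"
    unfolding iter_mat_def len by (rule eigenvalue_minv_mult_iff[OF A B det])
  also have "\<dots> \<longleftrightarrow> (\<exists>X. (\<exists>k<n. \<exists>c<n. X k c \<noteq> 0) \<and> (\<forall>k<n. \<forall>c<n.
      mat_act (n * n) (blockU n ?Bs) (\<lambda>a. X (a div n) (a mod n)) (k * n + c)
      = z * mat_act (n * n) ?A (\<lambda>a. X (a div n) (a mod n)) (k * n + c)))"
    by (rule ex_block_fun_iff)
  also have "\<dots> \<longleftrightarrow> (\<exists>X. (\<exists>k<n. \<exists>c<n. X k c \<noteq> 0) \<and> (\<forall>k<n. \<forall>c<n. futr_eq n L U z X k c))"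
    using mat_act_B_FUTR_iff_futr_eq[OF U] by simp
  finally show ?thesis .
qed

lemma eigenvalue_B_bGS_iff:
  assumes L: "L \<in> carrier_mat n n" and U: "strictly_upper n U"
  shows "eigenvalue (map_mat complex_of_real (B_bGS n L U)) z
    \<longleftrightarrow> (\<exists>y. (\<exists>c<n. y c \<noteq> 0) \<and> (\<forall>c<n. mat_act n L y c = z * (y c - mat_act n U y c)))"
proof -
  have Uc: "U \<in> carrier_mat n n" using U unfolding strictly_upper_def by simp
  have A: "1\<^sub>m n - U \<in> carrier_mat n n" using Uc by (intro minus_carrier_mat) auto
  have "det (1\<^sub>m n - U) = 1"
    by (rule det_unit_upper_triangular[OF A]) (use U in \<open>auto simp: strictly_upper_def\<close>)
  hence "eigenvalue (map_mat complex_of_real (B_bGS n L U)) z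
    \<longleftrightarrow> (\<exists>y. (\<exists>c<n. y c \<noteq> 0) \<and> (\<forall>c<n. mat_act n L y c = z * mat_act n (1\<^sub>m n - U) y c))"
    unfolding B_bGS_def by (intro eigenvalue_minv_mult_iff[OF A L]) simp
  thus ?thesis using mat_act_one_minus[OF Uc] by simp
qed

context
  fixes n :: nat and L U :: "real mat" and z :: complex and X :: "nat \<Rightarrow> nat \<Rightarrow> complex"
  assumes U: "strictly_upper n U" and z: "z \<noteq> 0"
    and E: "\<forall>k<n. \<forall>c<n. futr_eq n L U z X k c"
begin

lemma futr_eq_last_block:
  assumes k: "k < n" and c: "c < n" and "n \<le> c + k + 1"
  shows "X k c = X (n - 1) c"
proof -
  let ?G = "if c + 2 \<le> n then mat_act n U (X (n - 2 - c)) c else 0"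
  have "mat_act n L (X (n - 1)) c = z * (X k c - ?G)"
    using E[rule_format, OF k c] assms(3) unfolding futr_eq_def by auto
  moreover have "mat_act n L (X (n - 1)) c = z * (X (n - 1) c - ?G)"
    using E[rule_format, of "n - 1" c] c unfolding futr_eq_def by auto
  ultimately show ?thesis using z by simp
qed

lemma futr_eq_upper_block:
  assumes c: "c < n"
  shows "mat_act n U (X (n - 2 - c)) c = mat_act n U (X (n - 1)) c"
proof (rule mat_act_strictly_upper_cong[OF U c])
  fix c' assume "c < c'" "c' < n"
  thus "X (n - 2 - c) c' = X (n - 1) c'" by (intro futr_eq_last_block) auto
qed

lemma futr_eq_imp_bGS_eq:
  assumes c: "c < n"
  shows "mat_act n L (X (n - 1)) c = z * (X (n - 1) c - mat_act n U (X (n - 1)) c)"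
proof (cases "c + 2 \<le> n")
  case True
  thus ?thesis
    using E[rule_format, of "n - 1" c] c futr_eq_upper_block[OF c] unfolding futr_eq_def by auto
next
  case False
  hence "c = n - 1" using c by simp
  hence "mat_act n U (X (n - 1)) c = 0" using mat_act_strictly_upper_last_row[OF U] by simp
  thus ?thesis using E[rule_format, of "n - 1" c] c False unfolding futr_eq_def by auto
qed

lemma futr_eq_last_block_zero_imp_zero:
  assumes y: "\<forall>c<n. X (n - 1) c = 0" and k: "k < n" and c: "c < n"
  shows "X k c = 0"
proof (cases "n \<le> c + k + 1")
  case True
  thus ?thesis using futr_eq_last_block[OF k c] y c by simp
next
  case False
  have "mat_act n L (X (n - 1)) c = 0" "mat_act n U (X (n - 1)) c = 0"
    using y by (simp_all add: mat_act_eq_0)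
  hence "z * X k c = 0"
    using E[rule_format, OF k c] False futr_eq_upper_block[OF c] unfolding futr_eq_def by auto
  thus ?thesis using z by simp
qed

end

lemma futr_eq_solvable_iff_bGS_eq:
  assumes U: "strictly_upper n U" and z: "z \<noteq> 0"
  shows "(\<exists>X. (\<exists>k<n. \<exists>c<n. X k c \<noteq> 0) \<and> (\<forall>k<n. \<forall>c<n. futr_eq n L U z X k c))
    \<longleftrightarrow> (\<exists>y. (\<exists>c<n. y c \<noteq> 0) \<and> (\<forall>c<n. mat_act n L y c = z * (y c - mat_act n U y c)))"
proof
  assume "\<exists>X. (\<exists>k<n. \<exists>c<n. X k c \<noteq> 0) \<and> (\<forall>k<n. \<forall>c<n. futr_eq n L U z X k c)"
  then obtain X where nz: "\<exists>k<n. \<exists>c<n. X k c \<noteq> 0" and E: "\<forall>k<n. \<forall>c<n. futr_eq n L U z X k c"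
    by blast
  have "\<exists>c<n. X (n - 1) c \<noteq> 0" using nz futr_eq_last_block_zero_imp_zero[OF U z E] by blast
  thus "\<exists>y. (\<exists>c<n. y c \<noteq> 0) \<and> (\<forall>c<n. mat_act n L y c = z * (y c - mat_act n U y c))"
    using futr_eq_imp_bGS_eq[OF U z E] by blast
next
  assume "\<exists>y. (\<exists>c<n. y c \<noteq> 0) \<and> (\<forall>c<n. mat_act n L y c = z * (y c - mat_act n U y c))"
  then obtain y c0 where c0: "c0 < n" "y c0 \<noteq> 0"
    and Y: "\<And>c. c < n \<Longrightarrow> mat_act n L y c = z * (y c - mat_act n U y c)" by blast
  define X where
    "X k c = (if n \<le> c + k + 1 then y c else y c + (1 - z) / z * mat_act n U y c)" for k c
  have X_last: "X (n - 1) = y" using c0 unfolding X_def by (auto simp: fun_eq_iff)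
  have X_upper: "mat_act n U (X (n - 2 - c)) c = mat_act n U y c" if "c < n" for c
    by (rule mat_act_strictly_upper_cong[OF U that]) (auto simp: X_def)
  have "futr_eq n L U z X k c" if k: "k < n" and c: "c < n" for k c
  proof (cases "c + k + 2 \<le> n")
    case True
    have "z * X k c = z * y c + (1 - z) * mat_act n U y c"
      using True z by (simp add: X_def field_simps)
    also have "\<dots> = mat_act n L y c + mat_act n U y c"
      using Y[OF c] by (simp add: algebra_simps)
    finally show ?thesis using True X_upper[OF c] unfolding futr_eq_def X_last by simp
  next
    case False
    show ?thesis
    proof (cases "c + 2 \<le> n")
      case True
      thus ?thesis using False Y[OF c] X_upper[OF c] unfolding futr_eq_def X_last by (simp add: X_def)
    next
      case last_row: False
      hence "c = n - 1" using c by simp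
      hence "mat_act n U y c = 0" using mat_act_strictly_upper_last_row[OF U] by simp
      thus ?thesis using False last_row Y[OF c] unfolding futr_eq_def X_last by (simp add: X_def)
    qed
  qed
  moreover have "X (n - 1) c0 \<noteq> 0" "n - 1 < n" using X_last c0 by auto
  ultimately show "\<exists>X. (\<exists>k<n. \<exists>c<n. X k c \<noteq> 0) \<and> (\<forall>k<n. \<forall>c<n. futr_eq n L U z X k c)"
    using c0 by blast
qed

theorem theorem6p3:
  fixes n :: nat and L U :: "real mat"
  assumes "strictly_lower n L" and "strictly_upper n U"
    and "L \<noteq> 0\<^sub>m n n"
    and "\<forall>i < n - 1. Ur n U i \<noteq> 0\<^sub>m n n"
  shows "\<forall>z::complex. z \<noteq> 0 \<longrightarrow>
     (eigenvalue (map_mat complex_of_real (iter_mat n (B_FUTR n L U))) z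
      \<longleftrightarrow> eigenvalue (map_mat complex_of_real (B_bGS n L U)) z)"
  \<comment> \<open>the hypotheses on \<open>Ur\<close> only make \<open>B_FUTR\<close> a splitting; \<open>L \<noteq> 0\<close> is used only for \<open>n > 0\<close>\<close>
proof (intro allI impI)
  fix z :: complex assume z: "z \<noteq> 0"
  have L: "L \<in> carrier_mat n n" using assms(1) unfolding strictly_lower_def by simp
  have n: "0 < n"
  proof (rule ccontr)
    assume "\<not> 0 < n"
    hence "L = 0\<^sub>m n n" using L by (intro eq_matI) auto
    thus False using assms(3) by simp
  qed
  show "eigenvalue (map_mat complex_of_real (iter_mat n (B_FUTR n L U))) z
      \<longleftrightarrow> eigenvalue (map_mat complex_of_real (B_bGS n L U)) z"
    unfolding eigenvalue_iter_mat_B_FUTR_iff[OF assms(2) n] eigenvalue_B_bGS_iff[OF L assms(2)]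
    by (rule futr_eq_solvable_iff_bGS_eq[OF assms(2) z])
qed

end
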